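(* Let $S=(0,1)$. Let $\{\lambda_n\}_{n\geq 1}$ be i.i.d. random variables, each uniformly distributed on $(3.87,4)$, and let $X_0$ be an $S$-valued random variable independent of the $\lambda_n$'s. Define the Markov process $X_{n+1}=\lambda_{n+1}X_n(1-X_n)$ for $n\geq 0$. Let $A_0=\left(1-\frac{1}{3.87},\,\frac34\right)$ and let $\phi$ be normalized Lebesgue measure on $A_0$, i.e. $\phi(B)=\mathrm{Leb}(B\cap A_0)/\mathrm{Leb}(A_0)$. Then $\{X_n\}_{n\geq 0}$ is $\phi$-irreducible: for every $x\in S$ and every Borel set $B\subset S$ with $\phi(B)>0$, there is $n\geq 1$ such that $p^n(x,B)=\mathrm{Prob}(X_n\in B\mid X_0=x)>0$.
   Context: $p^n(x,B)$ denotes the $n$-step transition probability $\mathrm{Prob}(X_n\in B\mid X_0=x)$ of the Markov chain. *)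

theory Defs
  imports "HOL-Probability.Probability"
begin

definition lam_dist :: "real measure" where
  "lam_dist = uniform_measure lborel {3.87<..<4}"

definition logistic :: "real \<Rightarrow> real \<Rightarrow> real" where
  "logistic l y = l * y * (1 - y)"

text \<open>Trajectory: X_0 = x, X_(k+1) = lambda_(k+1) X_k (1 - X_k), where lambda_(k+1) is
  stored as component k of the parameter vector lam.\<close>
fun traj :: "real \<Rightarrow> (nat \<Rightarrow> real) \<Rightarrow> nat \<Rightarrow> real" where
  "traj x lam 0 = x"
| "traj x lam (Suc k) = logistic (lam k) (traj x lam k)"

definition trans_prob :: "nat \<Rightarrow> real \<Rightarrow> real set \<Rightarrow> real" where
  "trans_prob n x B =
     measure (PiM {..<n} (\<lambda>_. lam_dist))
       {lam \<in> space (PiM {..<n} (\<lambda>_. lam_dist)). traj x lam n \<in> B}"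

definition A0 :: "real set" where
  "A0 = {1 - 1/3.87 <..< 3/4}"

definition phi :: "real set \<Rightarrow> real" where
  "phi B = measure lborel (B \<inter> A0) / measure lborel A0"

end

theory Submission
  imports Defs
begin

text \<open>
  Call y good if some parameters in (3.87, 4) steer it into A0, which is the set of fixed
  points 1 - 1/l of the maps y \<mapsto> l y (1 - y). The successors of y fill the interval
  (3.87 u, 4 u), u = y (1 - y), so if every point of an interval (c, d) is good, then so is
  every y in the band c/4 < y (1 - y) < d/3.87. Starting from A0, a dozen such steps
  (with endpoints rounded inwards to three decimals) show that the band
  0.108 < y (1 - y) \<le> 1/4 is good; below it the parameter 3.9 at least doubles y (1 - y),
  so every y in (0, 1) is good.

  Steering into the open set A0 survives small perturbations of the parameters, so by Fubini
  it happens with positive probability. From z in A0 the map l \<mapsto> l z (1 - z) sends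
  (3.87, 4) affinely onto an interval containing A0, so one more step lands in B with
  positive probability whenever B \<inter> A0 has positive Lebesgue measure.
\<close>

section \<open>Steering points into A0\<close>

definition reaches_A0 :: "real set" where
  "reaches_A0 = {y. \<exists>m lam. (\<forall>j<m. lam j \<in> {3.87<..<4}) \<and> traj y lam m \<in> A0}"

definition band :: "real \<Rightarrow> real \<Rightarrow> real set" where
  "band p q = {y \<in> {0<..<1}. p < y * (1 - y) \<and> y * (1 - y) < q}"

lemma traj_case_nat_Suc: "traj x (case_nat l lam) (Suc k) = traj (logistic l x) lam k"
  by (induction k) auto

lemma reaches_A0_if_logistic:
  assumes "logistic l y \<in> reaches_A0" and "l \<in> {3.87<..<4}"
  shows "y \<in> reaches_A0"
proof -
  obtain m lam where "\<forall>j<m. lam j \<in> {3.87<..<4}" and "traj (logistic l y) lam m \<in> A0"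
    using assms(1) unfolding reaches_A0_def by blast
  moreover have "traj y (case_nat l lam) (Suc m) = traj (logistic l y) lam m"
    by (rule traj_case_nat_Suc)
  ultimately show ?thesis
    using assms(2) unfolding reaches_A0_def
    by (intro CollectI exI[of _ "Suc m"] exI[of _ "case_nat l lam"]) (auto simp: less_Suc_eq_0_disj)
qed

lemma A0_subset_reaches_A0: "A0 \<subseteq> reaches_A0"
  unfolding reaches_A0_def by (force intro: exI[of _ 0])

lemma band_subset_reaches_A0_if_interval:
  assumes "{c<..<d} \<subseteq> reaches_A0" and "c < d"
  shows "band (c/4) (d/3.87) \<subseteq> reaches_A0"
proof
  fix y assume y: "y \<in> band (c/4) (d/3.87)"
  define u where "u = y * (1 - y)"
  have u: "0 < u" "c < 4 * u" "3.87 * u < d"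
    using y by (auto simp: band_def u_def)
  \<comment> \<open>any point t of (c, d) in the range (3.87 u, 4 u) of successors of y will do\<close>
  define t where "t = (max c (3.87 * u) + min d (4 * u)) / 2"
  have t: "c < t" "t < d" "3.87 * u < t" "t < 4 * u"
    using u \<open>c < d\<close> by (auto simp: t_def)
  have "logistic (t/u) y = t/u * u"
    by (simp add: logistic_def u_def)
  then have "logistic (t/u) y = t"
    using \<open>0 < u\<close> by simp
  moreover have "t \<in> reaches_A0"
    using assms(1) t by auto
  moreover have "t/u \<in> {3.87<..<4}"
    using t \<open>0 < u\<close> by (simp add: field_simps)
  ultimately show "y \<in> reaches_A0"
    using reaches_A0_if_logistic by metis
qed

lemma mult_one_minus_strict_mono:
  fixes c t :: real
  assumes "c < t" and "t + c < 1"
  shows "c * (1 - c) < t * (1 - t)"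
proof -
  have "t * (1 - t) - c * (1 - c) = (t - c) * (1 - t - c)"
    by algebra
  moreover have "(t - c) * (1 - t - c) > 0"
    using assms by simp
  ultimately show ?thesis
    by linarith
qed

lemma lower_interval_subset_band:
  assumes "0 \<le> c" "d \<le> 1/2" "p \<le> c * (1 - c)" "d * (1 - d) \<le> q"
  shows "{c<..<d} \<subseteq> band p q"
proof
  fix y assume "y \<in> {c<..<d}"
  then have "c * (1 - c) < y * (1 - y)" "y * (1 - y) < d * (1 - d)"
    using assms by (auto intro!: mult_one_minus_strict_mono)
  with \<open>y \<in> {c<..<d}\<close> assms show "y \<in> band p q"
    by (auto simp: band_def)
qed

lemma upper_interval_subset_band:
  assumes "0 \<le> c" "d \<le> 1/2" "p \<le> c * (1 - c)" "d * (1 - d) \<le> q"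
  shows "{1-d<..<1-c} \<subseteq> band p q"
proof
  fix y assume y: "y \<in> {1-d<..<1-c}"
  then have "1 - y \<in> band p q"
    using lower_interval_subset_band[OF assms] by auto
  then show "y \<in> band p q"
    using y assms by (auto simp: band_def algebra_simps)
qed

lemma band_preimage_lower:
  assumes "band p q \<subseteq> reaches_A0"
    and "0 \<le> c" "c < d" "d \<le> 1/2" "p \<le> c * (1 - c)" "d * (1 - d) \<le> q"
  shows "band (c/4) (d/3.87) \<subseteq> reaches_A0"
  using lower_interval_subset_band[OF assms(2,4-6)] assms(1,3)
  by (intro band_subset_reaches_A0_if_interval) auto

lemma band_preimage_upper:
  assumes "band p q \<subseteq> reaches_A0"
    and "0 \<le> c" "c < d" "d \<le> 1/2" "p \<le> c * (1 - c)" "d * (1 - d) \<le> q"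
  shows "band ((1-d)/4) ((1-c)/3.87) \<subseteq> reaches_A0"
  using upper_interval_subset_band[OF assms(2,4-6)] assms(1,3)
  by (intro band_subset_reaches_A0_if_interval) auto

lemma band_join:
  assumes "band p q \<subseteq> S" and "band p' q' \<subseteq> S" and "p' < q"
  shows "band p q' \<subseteq> S"
  using assms by (force simp: band_def)

lemma band_A0_subset_reaches_A0: "band ((1 - 1/3.87)/4) ((3/4)/3.87) \<subseteq> reaches_A0"
  using A0_subset_reaches_A0 by (intro band_subset_reaches_A0_if_interval) (auto simp: A0_def)

lemma bands_subset_reaches_A0:
  shows "band (0.432/4) ((1 - 0.432)/3.87) \<subseteq> reaches_A0"
    and "band ((1 - 0.303)/4) ((3/4)/3.87) \<subseteq> reaches_A0"
    and "band ((1 - 0.206)/4) ((1 - 0.017)/3.87) \<subseteq> reaches_A0"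
proof -
  note b0 = band_A0_subset_reaches_A0
  have b1: "band (0.246/4) (0.262/3.87) \<subseteq> reaches_A0"
    by (rule band_preimage_lower[OF b0]) simp_all
  have b2: "band (0.066/4) (0.073/3.87) \<subseteq> reaches_A0"
    and b3: "band ((1 - 0.073)/4) ((1 - 0.066)/3.87) \<subseteq> reaches_A0"
    by (rule band_preimage_lower[OF b1] band_preimage_upper[OF b1]; simp)+
  have b4: "band ((1 - 0.019)/4) ((1 - 0.017)/3.87) \<subseteq> reaches_A0"
    by (rule band_preimage_upper[OF b2]) simp_all
  have b5: "band (0.365/4) (0.406/3.87) \<subseteq> reaches_A0"
    and b6: "band ((1 - 0.406)/4) ((1 - 0.365)/3.87) \<subseteq> reaches_A0"
    by (rule band_preimage_lower[OF b3] band_preimage_upper[OF b3]; simp)+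
  have b7: "band ((1 - 0.119)/4) ((1 - 0.066)/3.87) \<subseteq> reaches_A0"
    by (rule band_join[OF band_preimage_upper[OF b5, of "0.102" "0.119"] b3]) simp_all
  have b8: "band (0.182/4) (0.206/3.87) \<subseteq> reaches_A0"
    and b9: "band ((1 - 0.206)/4) ((1 - 0.182)/3.87) \<subseteq> reaches_A0"
    by (rule band_preimage_lower[OF b6] band_preimage_upper[OF b6]; simp)+
  have b10: "band ((1 - 0.056)/4) ((1 - 0.048)/3.87) \<subseteq> reaches_A0"
    by (rule band_preimage_upper[OF b8]) simp_all
  show b11: "band (0.432/4) ((1 - 0.432)/3.87) \<subseteq> reaches_A0"
    by (rule band_join[OF band_preimage_lower[OF b4, of "0.432" "0.5"]
          band_preimage_upper[OF b4, of "0.432" "0.5"]]) simp_all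
  show "band ((1 - 0.303)/4) ((3/4)/3.87) \<subseteq> reaches_A0"
    by (rule band_join[OF band_preimage_upper[OF b9, of "0.274" "0.303"] b0]) simp_all
  have b12: "band ((1 - 0.178)/4) ((1 - 0.124)/3.87) \<subseteq> reaches_A0"
    by (rule band_preimage_upper[OF b11]) simp_all
  have "band ((1 - 0.206)/4) ((1 - 0.124)/3.87) \<subseteq> reaches_A0"
    by (rule band_join[OF b9 b12]) simp
  then have "band ((1 - 0.206)/4) ((1 - 0.066)/3.87) \<subseteq> reaches_A0"
    by (rule band_join[OF _ b7]) simp
  then have "band ((1 - 0.206)/4) ((1 - 0.048)/3.87) \<subseteq> reaches_A0"
    by (rule band_join[OF _ b10]) simp
  then show "band ((1 - 0.206)/4) ((1 - 0.017)/3.87) \<subseteq> reaches_A0"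
    by (rule band_join[OF _ b4]) simp
qed

lemma wide_band_subset_reaches_A0: "band (0.432/4) ((1 - 0.017)/3.87) \<subseteq> reaches_A0"
proof -
  note b = bands_subset_reaches_A0
  have "band (0.432/4) ((1 - 0.274)/3.87) \<subseteq> reaches_A0"
    by (rule band_join[OF b(1) band_preimage_upper[OF b(3), of "0.274" "0.5"]]) simp_all
  then have "band (0.432/4) ((1 - 0.225)/3.87) \<subseteq> reaches_A0"
    by (rule band_join[OF _ band_preimage_upper[OF b(2), of "0.225" "0.262"]]) simp_all
  then show ?thesis
    by (rule band_join[OF _ b(3)]) simp
qed

lemma reaches_A0_below_band:
  assumes band: "band a q \<subseteq> reaches_A0" and "0 < a" "a \<le> 0.12" and "1/4 < q"
    and "y \<in> {0<..<1}" "a / 2^n < y * (1 - y)"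
  shows "y \<in> reaches_A0"
  using assms(5,6)
proof (induction n arbitrary: y)
  case 0
  have "y * (1 - y) \<le> 1/4"
    using sum_power2_ge_zero[of "y - 1/2" 0] by (simp add: algebra_simps power2_eq_square)
  with 0 \<open>1/4 < q\<close> band show ?case
    by (auto simp: band_def)
next
  case (Suc n)
  show ?case
  proof (cases "a / 2^n < y * (1 - y)")
    case True
    then show ?thesis
      using Suc by blast
  next
    case False
    \<comment> \<open>below a, the parameter 3.9 at least doubles y (1 - y)\<close>
    define z where "z = 3.9 * (y * (1 - y))"
    have "a / 2^n \<le> a"
      using \<open>0 < a\<close> by (simp add: divide_le_eq)
    then have z: "0 < z" "z \<le> 0.468"
      using False Suc.prems \<open>a \<le> 0.12\<close> by (auto simp: z_def)
    then have "2 * (y * (1 - y)) \<le> (3.9 * (1 - z)) * (y * (1 - y))"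
      using Suc.prems by (intro mult_right_mono) auto
    also have "\<dots> = z * (1 - z)"
      by (simp add: z_def)
    finally have "2 * (y * (1 - y)) \<le> z * (1 - z)" .
    moreover have "a / 2^n = 2 * (a / 2 ^ Suc n)"
      by simp
    ultimately have "a / 2^n < z * (1 - z)"
      using Suc.prems by linarith
    then have "z \<in> reaches_A0"
      using Suc.IH z by auto
    moreover have "logistic 3.9 y = z"
      by (simp add: logistic_def z_def)
    ultimately show ?thesis
      using reaches_A0_if_logistic[of "3.9" y] by simp
  qed
qed

lemma unit_interval_subset_reaches_A0_if_band:
  assumes "band a q \<subseteq> reaches_A0" and "0 < a" "a \<le> 0.12" and "1/4 < q"
  shows "{0<..<1} \<subseteq> reaches_A0"
proof
  fix y :: real assume y: "y \<in> {0<..<1}"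
  then have "0 < y * (1 - y) / a"
    using \<open>0 < a\<close> by simp
  then obtain n where "(1/2::real)^n < y * (1 - y) / a"
    using real_arch_pow_inv[of "y * (1 - y) / a" "1/2"] by auto
  then have "a / 2^n < y * (1 - y)"
    using \<open>0 < a\<close> by (auto simp: field_simps power_divide)
  with assms y show "y \<in> reaches_A0"
    by (rule reaches_A0_below_band)
qed

lemma unit_interval_subset_reaches_A0: "{0<..<1} \<subseteq> reaches_A0"
  using wide_band_subset_reaches_A0 by (rule unit_interval_subset_reaches_A0_if_band) simp_all

section \<open>Positivity of the transition probabilities\<close>

lemma (in product_sigma_finite) emeasure_PiM_insert_pos:
  assumes "finite I" "i \<notin> I" and T: "T \<in> sets (Pi\<^sub>M (insert i I) M)"
    and pos: "0 < emeasure (Pi\<^sub>M I M)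
                 {x \<in> space (Pi\<^sub>M I M). 0 < emeasure (M i) {y \<in> space (M i). x(i := y) \<in> T}}"
  shows "0 < emeasure (Pi\<^sub>M (insert i I) M) T"
proof -
  interpret Mi: sigma_finite_measure "M i"
    by (rule sigma_finite_measures)
  define f where "f x = (\<integral>\<^sup>+ y. indicator T (x(i := y)) \<partial>M i)" for x
  have f_eq: "f x = emeasure (M i) {y \<in> space (M i). x(i := y) \<in> T}" if "x \<in> space (Pi\<^sub>M I M)" for x
  proof -
    have "(\<lambda>y. x(i := y)) \<in> measurable (M i) (Pi\<^sub>M (insert i I) M)"
      using that \<open>i \<notin> I\<close> by (rule measurable_component_update)
    from measurable_sets[OF this T]
    have "{y \<in> space (M i). x(i := y) \<in> T} \<in> sets (M i)"
      by (simp add: vimage_def Int_def conj_commute)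
    then have "emeasure (M i) {y \<in> space (M i). x(i := y) \<in> T}
        = (\<integral>\<^sup>+ y. indicator {y \<in> space (M i). x(i := y) \<in> T} y \<partial>M i)"
      by simp
    also have "\<dots> = f x"
      unfolding f_def by (intro nn_integral_cong) (simp add: indicator_def)
    finally show ?thesis ..
  qed
  have f_meas: "f \<in> borel_measurable (Pi\<^sub>M I M)"
    unfolding f_def using T by measurable
  have "emeasure (Pi\<^sub>M (insert i I) M) T = (\<integral>\<^sup>+ x. f x \<partial>Pi\<^sub>M I M)"
    using product_nn_integral_insert[OF assms(1,2), of "indicator T"] T by (simp add: f_def)
  moreover have "\<not> (AE x in Pi\<^sub>M I M. f x = 0)"
  proof
    assume "AE x in Pi\<^sub>M I M. f x = 0"
    moreover have "{x \<in> space (Pi\<^sub>M I M). \<not> f x = 0} \<in> sets (Pi\<^sub>M I M)"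
      using f_meas by measurable
    ultimately have "emeasure (Pi\<^sub>M I M) {x \<in> space (Pi\<^sub>M I M). f x \<noteq> 0} = 0"
      by (simp add: AE_iff_measurable[OF _ refl])
    moreover have "{x \<in> space (Pi\<^sub>M I M). f x \<noteq> 0}
        = {x \<in> space (Pi\<^sub>M I M). 0 < emeasure (M i) {y \<in> space (M i). x(i := y) \<in> T}}"
      using f_eq by (auto simp: zero_less_iff_neq_zero)
    ultimately show False
      using pos by simp
  qed
  ultimately show ?thesis
    using nn_integral_0_iff_AE[OF f_meas] by (simp add: zero_less_iff_neq_zero)
qed

lemma emeasure_lborel_open_pos:
  fixes U :: "real set"
  assumes "open U" and "t \<in> U"
  shows "0 < emeasure lborel U"
proof -
  obtain e where "0 < e" and "ball t e \<subseteq> U"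
    using assms openE by blast
  then have "emeasure lborel {t - e<..<t + e} \<le> emeasure lborel U"
    using \<open>open U\<close> by (intro emeasure_mono) (auto simp: ball_eq_greaterThanLessThan)
  moreover have "0 < emeasure lborel {t - e<..<t + e}"
    using \<open>0 < e\<close> by simp
  ultimately show ?thesis
    by order
qed

lemma emeasure_lborel_vimage_mult:
  fixes c :: real
  assumes "A \<in> sets borel" and "c \<noteq> 0"
  shows "emeasure lborel ((*) c -` A) = ennreal (inverse \<bar>c\<bar>) * emeasure lborel A"
proof -
  have "emeasure lborel ((*) c -` A) = emeasure (distr lborel borel ((*) c)) A"
    using assms by (subst emeasure_distr) auto
  also have "\<dots> = ennreal (inverse \<bar>c\<bar>) * emeasure lborel A"
    using assms by (simp add: lborel_distr_mult emeasure_density_const)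
  finally show ?thesis .
qed

lemma sets_lam_dist [simp, measurable_cong]: "sets lam_dist = sets borel"
  by (simp add: lam_dist_def)

lemma space_lam_dist [simp]: "space lam_dist = UNIV"
  by (simp add: lam_dist_def)

lemma prob_space_lam_dist: "prob_space lam_dist"
  unfolding lam_dist_def by (rule prob_space_uniform_measure) auto

interpretation lam_dist_product: product_sigma_finite "\<lambda>_::nat. lam_dist"
  unfolding product_sigma_finite_def
  using prob_space_lam_dist prob_space_imp_sigma_finite by blast

lemma emeasure_lam_dist_pos:
  assumes "A \<in> sets borel" and "0 < emeasure lborel ({3.87<..<4} \<inter> A)"
  shows "0 < emeasure lam_dist A"
  using assms unfolding lam_dist_def
  by (subst emeasure_uniform_measure) (auto simp: ennreal_divide_eq_top_iff zero_less_iff_neq_zero)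

abbreviation lam_seq :: "nat \<Rightarrow> (nat \<Rightarrow> real) measure" where
  "lam_seq n \<equiv> \<Pi>\<^sub>M j\<in>{..<n}. lam_dist"

lemma measurable_traj [measurable]:
  "k \<le> n \<Longrightarrow> (\<lambda>lam. traj x lam k) \<in> borel_measurable (lam_seq n)"
proof (induction k)
  case (Suc k)
  have "(\<lambda>lam. lam k) \<in> borel_measurable (lam_seq n)"
    using Suc.prems by (simp add: measurable_cong_sets[OF refl sets_lam_dist, symmetric])
  moreover have "(\<lambda>lam. traj x lam k) \<in> borel_measurable (lam_seq n)"
    using Suc by simp
  ultimately show ?case
    unfolding traj.simps logistic_def by measurable
qed simp

lemma traj_fun_upd: "k \<le> m \<Longrightarrow> traj x (lam(m := y)) k = traj x lam k"
  by (induction k) auto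

lemma emeasure_traj_Suc_pos:
  assumes V: "V \<in> sets borel" and "W \<in> sets borel"
    and pos: "0 < emeasure (lam_seq m) {lam \<in> space (lam_seq m). traj x lam m \<in> W}"
    and step_pos: "\<And>z. z \<in> W \<Longrightarrow> 0 < emeasure lam_dist {l. logistic l z \<in> V}"
  shows "0 < emeasure (lam_seq (Suc m)) {lam \<in> space (lam_seq (Suc m)). traj x lam (Suc m) \<in> V}"
proof -
  define T where "T = {lam \<in> space (lam_seq (Suc m)). traj x lam (Suc m) \<in> V}"
  have T: "T \<in> sets (\<Pi>\<^sub>M j\<in>insert m {..<m}. lam_dist)"
    unfolding T_def lessThan_Suc[symmetric] using V by measurable
  have "{y \<in> space lam_dist. lam(m := y) \<in> T} = {l. logistic l (traj x lam m) \<in> V}"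
    if "lam \<in> space (lam_seq m)" for lam
    using that by (auto simp: T_def traj_fun_upd space_PiM PiE_iff extensional_def)
  then have "{lam \<in> space (lam_seq m). traj x lam m \<in> W}
      \<subseteq> {lam \<in> space (lam_seq m). 0 < emeasure lam_dist {y \<in> space lam_dist. lam(m := y) \<in> T}}"
    using step_pos by auto
  with pos have "0 < emeasure (lam_seq m)
      {lam \<in> space (lam_seq m). 0 < emeasure lam_dist {y \<in> space lam_dist. lam(m := y) \<in> T}}"
    by (rule order_less_le_trans[OF _ emeasure_mono]) (use T in measurable)
  from lam_dist_product.emeasure_PiM_insert_pos[OF _ _ T this] show ?thesis
    by (simp add: T_def lessThan_Suc)
qed

lemma emeasure_traj_open_pos:
  assumes "open V" and "\<forall>j<m. lam0 j \<in> {3.87<..<4}" and "traj x lam0 m \<in> V"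
  shows "0 < emeasure (lam_seq m) {lam \<in> space (lam_seq m). traj x lam m \<in> V}"
  using assms
proof (induction m arbitrary: V)
  case 0
  interpret prob_space "lam_seq 0"
    by (intro prob_space_PiM prob_space_lam_dist)
  from 0 emeasure_space_1 show ?case
    by simp
next
  case (Suc m)
  define W where "W = (\<Union>l\<in>{3.87<..<4}. (\<lambda>z. logistic l z) -` V)"
  have "open W"
    unfolding W_def logistic_def using \<open>open V\<close>
    by (intro open_UN ballI continuous_open_vimage) (auto intro!: continuous_intros)
  moreover have "traj x lam0 m \<in> W"
    using Suc.prems by (auto simp: W_def)
  ultimately have "0 < emeasure (lam_seq m) {lam \<in> space (lam_seq m). traj x lam m \<in> W}"
    using Suc by simp
  moreover have "0 < emeasure lam_dist {l. logistic l z \<in> V}" if "z \<in> W" for z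
  proof -
    obtain l where l: "l \<in> {3.87<..<4}" "logistic l z \<in> V"
      using \<open>z \<in> W\<close> by (auto simp: W_def)
    have "open {l. logistic l z \<in> V}"
      unfolding logistic_def using \<open>open V\<close>
      by (intro continuous_open_vimage[unfolded vimage_def]) (auto intro!: continuous_intros)
    then have "0 < emeasure lborel ({3.87<..<4} \<inter> {l. logistic l z \<in> V})"
      using l by (intro emeasure_lborel_open_pos) auto
    with \<open>open {l. logistic l z \<in> V}\<close> show ?thesis
      by (intro emeasure_lam_dist_pos) auto
  qed
  ultimately show ?case
    using \<open>open V\<close> \<open>open W\<close> by (intro emeasure_traj_Suc_pos) auto
qed

lemma emeasure_lam_dist_logistic_pos:
  assumes B: "B \<in> sets borel" and pos: "0 < emeasure lborel (B \<inter> A0)" and "z \<in> A0"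
  shows "0 < emeasure lam_dist {l. logistic l z \<in> B}"
proof -
  define G where "G = z * (1 - z)"
  have "G * 4 - 3/4 = 4 * ((3/4 - z) * (z - 1/4))"
    and "(1 - 1/3.87) - G * 3.87 = 3.87 * ((z - (1 - 1/3.87)) * (z - 1/3.87))"
    by (simp_all add: G_def field_simps)
  moreover have "0 < 4 * ((3/4 - z) * (z - 1/4))"
    and "0 < 3.87 * ((z - (1 - 1/3.87)) * (z - 1/3.87))"
    using \<open>z \<in> A0\<close> by (simp_all add: A0_def)
  ultimately have G: "3/4 < G * 4" "G * 3.87 < 1 - 1/3.87"
    by linarith+
  then have "0 < G"
    by simp
  \<comment> \<open>hence A0 lies inside the range (3.87 G, 4 G) of the next step from z\<close>
  have "(*) G -` (B \<inter> A0) \<subseteq> {3.87<..<4} \<inter> {l. logistic l z \<in> B}"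
  proof
    fix l assume l: "l \<in> (*) G -` (B \<inter> A0)"
    then have "1 - 1/3.87 < G * l" "G * l < 3/4"
      by (auto simp: A0_def)
    then have "G * 3.87 < G * l" "G * l < G * 4"
      using G less_trans by blast+
    with \<open>0 < G\<close> have "3.87 < l" "l < 4"
      by simp_all
    moreover have "logistic l z = G * l"
      by (simp add: logistic_def G_def)
    ultimately show "l \<in> {3.87<..<4} \<inter> {l. logistic l z \<in> B}"
      using l by auto
  qed
  moreover have meas: "{l. logistic l z \<in> B} \<in> sets borel"
    using B unfolding logistic_def by measurable
  ultimately have le: "emeasure lborel ((*) G -` (B \<inter> A0))
      \<le> emeasure lborel ({3.87<..<4} \<inter> {l. logistic l z \<in> B})"
    by (intro emeasure_mono) auto
  have "emeasure lborel ((*) G -` (B \<inter> A0))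
      = ennreal (inverse \<bar>G\<bar>) * emeasure lborel (B \<inter> A0)"
    using B \<open>0 < G\<close> by (intro emeasure_lborel_vimage_mult) (auto simp: A0_def)
  with \<open>0 < G\<close> pos have "0 < emeasure lborel ((*) G -` (B \<inter> A0))"
    by (simp add: zero_less_iff_neq_zero)
  with le have "0 < emeasure lborel ({3.87<..<4} \<inter> {l. logistic l z \<in> B})"
    by order
  then show ?thesis
    using meas by (intro emeasure_lam_dist_pos)
qed

theorem mainTheorem3:
  fixes x :: real and B :: "real set"
  assumes "x \<in> {0<..<1}"
    and "B \<in> sets borel" and "B \<subseteq> {0<..<1}"
    and "phi B > 0"
  shows "\<exists>n\<ge>1. trans_prob n x B > 0"
proof -
  obtain m lam0 where lam0: "\<forall>j<m. lam0 j \<in> {3.87<..<4}" "traj x lam0 m \<in> A0"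
    using unit_interval_subset_reaches_A0 assms(1) unfolding reaches_A0_def by blast
  interpret prob_space "lam_seq (Suc m)"
    by (intro prob_space_PiM prob_space_lam_dist)
  have "open A0" "A0 \<in> sets borel"
    by (simp_all add: A0_def)
  have "measure lborel (B \<inter> A0) \<noteq> 0"
    using \<open>phi B > 0\<close> by (auto simp: phi_def)
  then have "0 < emeasure lborel (B \<inter> A0)"
    by (auto simp: measure_def zero_less_iff_neq_zero)
  then have "0 < emeasure lam_dist {l. logistic l z \<in> B}" if "z \<in> A0" for z
    using emeasure_lam_dist_logistic_pos assms(2) that by blast
  with emeasure_traj_open_pos[OF \<open>open A0\<close> lam0]
  have "0 < emeasure (lam_seq (Suc m))
      {lam \<in> space (lam_seq (Suc m)). traj x lam (Suc m) \<in> B}"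
    by (rule emeasure_traj_Suc_pos[OF assms(2) \<open>A0 \<in> sets borel\<close>])
  then have "0 < trans_prob (Suc m) x B"
    by (simp add: trans_prob_def emeasure_eq_measure)
  then show ?thesis
    by (intro exI[of _ "Suc m"]) simp
qed

end
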